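(* In a RiFle assignment game, the set of stable payoffs (viewed as a subset of $\mathbb R^n\times\mathbb R^n$) is compact.
   Context: A RiFle assignment game consists of two disjoint sets of agents $P=\{p_1,\dots,p_n\}$ and $Q=\{q_1,\dots,q_n\}$, a pair of nonnegative real numbers $(\beta_{ij},\gamma_{ij})$ for every pair $(p_i,q_j)\in P\times Q$ (write $\alpha_{ij}=\beta_{ij}+\gamma_{ij}$), and a designation of every agent as rigid or flexible. Let $\mathcal R$ be the set of pairs with at least one rigid agent and $\mathcal F$ the set of pairs with both agents flexible. An outcome $(\bar u,\bar v;\mu)$ consists of a matching $\mu$ between $P$ and $Q$ (write $p_i\stackrel{\mu}{\longleftrightarrow} q_j$) and payoff vectors $\bar u,\bar v\in\mathbb R^n$. It is feasible if: (1) $u_i\ge0$, $v_j\ge0$; (2) if a rigid $p_i$ is matched to $q_j$ then $u_i=\beta_{ij}$ and, if $q_j$ is flexible, $v_j\ge\gamma_{ij}$; symmetrically for a rigid $q_j$ matched to $p_i$: $v_j=\gamma_{ij}$ and, if $p_i$ is flexible, $u_i\ge\beta_{ij}$; (3) $\sum_iu_i+\sum_jv_j=\sum_{p_i\stackrel{\mu}{\longleftrightarrow}q_j}\alpha_{ij}$. It is stable if feasible and $u_i+v_j\ge\alpha_{ij}$ for $(p_i,q_j)\in\mathcal F$ and ($u_i\ge\beta_{ij}$ or $v_j\ge\gamma_{ij}$) for $(p_i,q_j)\in\mathcal R$. A payoff $(\bar u,\bar v)$ is stable if $(\bar u,\bar v;\mu)$ is a stable outcome for some matching $\mu$. *)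

theory Defs
  imports "HOL-Analysis.Analysis"
begin

(* Agents p_i and q_j are indexed by a finite type 'n (so n = CARD('n)).
   rigP i / rigQ j = True means p_i / q_j is rigid (False = flexible).
   A matching is a set M of pairs (i,j), meaning p_i <-> q_j, in which every
   agent occurs in at most one pair. *)

definition is_matching :: "('n \<times> 'n) set \<Rightarrow> bool" where
  "is_matching M \<longleftrightarrow>
     (\<forall>i j i' j'. (i, j) \<in> M \<longrightarrow> (i', j') \<in> M \<longrightarrow> (i = i' \<longleftrightarrow> j = j'))"

definition feasible_outcome ::
  "('n::finite \<Rightarrow> bool) \<Rightarrow> ('n \<Rightarrow> bool) \<Rightarrow> ('n \<Rightarrow> 'n \<Rightarrow> real) \<Rightarrow> ('n \<Rightarrow> 'n \<Rightarrow> real)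
   \<Rightarrow> real^'n \<Rightarrow> real^'n \<Rightarrow> ('n \<times> 'n) set \<Rightarrow> bool" where
  "feasible_outcome rigP rigQ \<beta> \<gamma> u v M \<longleftrightarrow>
     is_matching M \<and>
     (\<forall>i. u $ i \<ge> 0) \<and> (\<forall>j. v $ j \<ge> 0) \<and>
     (\<forall>i j. (i, j) \<in> M \<longrightarrow>
        (rigP i \<longrightarrow> u $ i = \<beta> i j \<and> (\<not> rigQ j \<longrightarrow> v $ j \<ge> \<gamma> i j)) \<and>
        (rigQ j \<longrightarrow> v $ j = \<gamma> i j \<and> (\<not> rigP i \<longrightarrow> u $ i \<ge> \<beta> i j))) \<and>
     (\<Sum>i\<in>UNIV. u $ i) + (\<Sum>j\<in>UNIV. v $ j) = (\<Sum>(i, j)\<in>M. \<beta> i j + \<gamma> i j)"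

definition stable_outcome ::
  "('n::finite \<Rightarrow> bool) \<Rightarrow> ('n \<Rightarrow> bool) \<Rightarrow> ('n \<Rightarrow> 'n \<Rightarrow> real) \<Rightarrow> ('n \<Rightarrow> 'n \<Rightarrow> real)
   \<Rightarrow> real^'n \<Rightarrow> real^'n \<Rightarrow> ('n \<times> 'n) set \<Rightarrow> bool" where
  "stable_outcome rigP rigQ \<beta> \<gamma> u v M \<longleftrightarrow>
     feasible_outcome rigP rigQ \<beta> \<gamma> u v M \<and>
     (\<forall>i j. \<not> rigP i \<and> \<not> rigQ j \<longrightarrow> u $ i + v $ j \<ge> \<beta> i j + \<gamma> i j) \<and>
     (\<forall>i j. rigP i \<or> rigQ j \<longrightarrow> u $ i \<ge> \<beta> i j \<or> v $ j \<ge> \<gamma> i j)"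

definition stable_payoffs ::
  "('n::finite \<Rightarrow> bool) \<Rightarrow> ('n \<Rightarrow> bool) \<Rightarrow> ('n \<Rightarrow> 'n \<Rightarrow> real) \<Rightarrow> ('n \<Rightarrow> 'n \<Rightarrow> real)
   \<Rightarrow> ((real^'n) \<times> (real^'n)) set" where
  "stable_payoffs rigP rigQ \<beta> \<gamma> = {(u, v). \<exists>M. stable_outcome rigP rigQ \<beta> \<gamma> u v M}"

end

theory Submission
  imports Defs
begin

text \<open>For a fixed matching, stability is a finite conjunction of weak inequalities and
  equations between continuous functions of the payoffs, so the payoffs stable with respect to
  that matching form a closed set; feasibility makes all payoffs nonnegative with total equal
  to the value of the matching, so this set is bounded. There are only finitely many matchings,
  and a finite union of compact sets is compact.\<close>

definition stable_payoffs_for ::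
  "('n::finite \<Rightarrow> bool) \<Rightarrow> ('n \<Rightarrow> bool) \<Rightarrow> ('n \<Rightarrow> 'n \<Rightarrow> real) \<Rightarrow> ('n \<Rightarrow> 'n \<Rightarrow> real)
   \<Rightarrow> ('n \<times> 'n) set \<Rightarrow> ((real^'n) \<times> (real^'n)) set" where
  "stable_payoffs_for rigP rigQ \<beta> \<gamma> M = {(u, v). stable_outcome rigP rigQ \<beta> \<gamma> u v M}"

lemma stable_payoffs_eq_UN:
  "stable_payoffs rigP rigQ \<beta> \<gamma> = (\<Union>M. stable_payoffs_for rigP rigQ \<beta> \<gamma> M)"
  unfolding stable_payoffs_def stable_payoffs_for_def by auto

lemma closed_stable_payoffs_for: "closed (stable_payoffs_for rigP rigQ \<beta> \<gamma> M)"
proof -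
  have "stable_payoffs_for rigP rigQ \<beta> \<gamma> M = {x. stable_outcome rigP rigQ \<beta> \<gamma> (fst x) (snd x) M}"
    unfolding stable_payoffs_for_def by auto
  also have "closed \<dots>"
    unfolding stable_outcome_def feasible_outcome_def
    by (intro closed_Collect_conj closed_Collect_all closed_Collect_imp closed_Collect_disj
        closed_Collect_le closed_Collect_eq closed_Collect_const open_Collect_const
        continuous_intros)
  finally show ?thesis .
qed

lemma bounded_nonneg_sum_le:
  fixes C :: real
  shows "bounded {x :: real^'n. (\<forall>i. 0 \<le> x $ i) \<and> (\<Sum>i\<in>UNIV. x $ i) \<le> C}"
proof (rule bounded_subset)
  show "bounded (cbox 0 (\<chi> _. C) :: (real^'n) set)"
    by (rule bounded_cbox)
  have "x $ i \<le> C" if "\<forall>i. 0 \<le> x $ i" "(\<Sum>i\<in>UNIV. x $ i) \<le> C" for x :: "real^'n" and i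
    using member_le_sum[of i UNIV "\<lambda>i. x $ i"] that by auto
  then show "{x :: real^'n. (\<forall>i. 0 \<le> x $ i) \<and> (\<Sum>i\<in>UNIV. x $ i) \<le> C} \<subseteq> cbox 0 (\<chi> _. C)"
    by (auto simp: mem_box_cart)
qed

lemma bounded_stable_payoffs_for:
  fixes rigP rigQ :: "'n::finite \<Rightarrow> bool"
  shows "bounded (stable_payoffs_for rigP rigQ \<beta> \<gamma> M)"
proof -
  define C where "C = (\<Sum>(i, j)\<in>M. \<beta> i j + \<gamma> i j)"
  define S where "S = {x :: real^'n. (\<forall>i. 0 \<le> x $ i) \<and> (\<Sum>i\<in>UNIV. x $ i) \<le> C}"
  have "(u, v) \<in> S \<times> S" if "stable_outcome rigP rigQ \<beta> \<gamma> u v M" for u v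
  proof -
    from that have nonneg: "\<forall>i. 0 \<le> u $ i" "\<forall>j. 0 \<le> v $ j"
      and total: "(\<Sum>i\<in>UNIV. u $ i) + (\<Sum>j\<in>UNIV. v $ j) = C"
      unfolding stable_outcome_def feasible_outcome_def C_def by auto
    have "0 \<le> (\<Sum>i\<in>UNIV. u $ i)" "0 \<le> (\<Sum>j\<in>UNIV. v $ j)"
      using nonneg by (auto intro: sum_nonneg)
    with nonneg total show ?thesis
      unfolding S_def by auto
  qed
  then have "stable_payoffs_for rigP rigQ \<beta> \<gamma> M \<subseteq> S \<times> S"
    unfolding stable_payoffs_for_def by auto
  moreover have "bounded (S \<times> S)"
    unfolding S_def by (intro bounded_Times bounded_nonneg_sum_le)
  ultimately show ?thesis
    by (rule bounded_subset[rotated])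
qed

theorem lemma4:
  fixes rigP rigQ :: "'n::finite \<Rightarrow> bool"
    and \<beta> \<gamma> :: "'n \<Rightarrow> 'n \<Rightarrow> real"
  assumes "\<And>i j. \<beta> i j \<ge> 0" and "\<And>i j. \<gamma> i j \<ge> 0"
  shows "compact (stable_payoffs rigP rigQ \<beta> \<gamma>)"
  unfolding stable_payoffs_eq_UN
proof (rule compact_UN)
  show "finite (UNIV :: ('n \<times> 'n) set set)"
    by simp
  show "compact (stable_payoffs_for rigP rigQ \<beta> \<gamma> M)" for M
    by (simp add: compact_eq_bounded_closed closed_stable_payoffs_for bounded_stable_payoffs_for)
qed

end
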